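(* For every series-parallel digraph $D$, the quantity $\phi(D)$ takes the same value for every binary decomposition tree of $D$.
   Context: A series-parallel digraph with source $s$ and sink $t$ is either a single arc from $s$ to $t$, or a series composition $D'\circ D''$ (identify the sink of $D'$ with the source of $D''$), or a parallel composition $D'\parallel D''$ (identify the two sources and the two sinks) of two series-parallel digraphs; parallel arcs are allowed. A binary decomposition tree of $D$ is a rooted binary tree whose leaves correspond bijectively to the arcs of $D$ and each internal vertex is labeled $S$ or $P$ and represents the series, respectively parallel, composition of the graphs of its two children, the root representing $D$. An $S$-component is a maximal connected set of tree vertices labeled $S$. For a given binary decomposition tree, $\phi(D)$ is defined as the maximum, over all root-to-leaf paths, of the number of distinct $S$-components the path traverses. *)

theory Defs
  imports Main
begin

datatype 'e dtree = Leaf 'e | SNode "'e dtree" "'e dtree" | PNode "'e dtree" "'e dtree"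

fun leaves :: "'e dtree \<Rightarrow> 'e list" where
  "leaves (Leaf e) = [e]"
| "leaves (SNode l r) = leaves l @ leaves r"
| "leaves (PNode l r) = leaves l @ leaves r"

definition tverts :: "('e \<Rightarrow> 'v) \<Rightarrow> ('e \<Rightarrow> 'v) \<Rightarrow> 'e dtree \<Rightarrow> 'v set" where
  "tverts tail head T = tail ` set (leaves T) \<union> head ` set (leaves T)"

text \<open>Identification of vertices is modelled by requiring
  the two parts to share exactly the identified vertices.\<close>
inductive realises :: "('e \<Rightarrow> 'v) \<Rightarrow> ('e \<Rightarrow> 'v) \<Rightarrow> 'e dtree \<Rightarrow> 'v \<Rightarrow> 'v \<Rightarrow> bool"
  for tail head where
  arc: "tail e = s \<Longrightarrow> head e = t \<Longrightarrow> s \<noteq> t \<Longrightarrow> realises tail head (Leaf e) s t"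
| ser: "realises tail head T1 s m \<Longrightarrow> realises tail head T2 m t
        \<Longrightarrow> tverts tail head T1 \<inter> tverts tail head T2 = {m}
        \<Longrightarrow> realises tail head (SNode T1 T2) s t"
| par: "realises tail head T1 s t \<Longrightarrow> realises tail head T2 s t
        \<Longrightarrow> tverts tail head T1 \<inter> tverts tail head T2 = {s, t}
        \<Longrightarrow> realises tail head (PNode T1 T2) s t"

definition is_decomp_tree ::
  "'e set \<Rightarrow> ('e \<Rightarrow> 'v) \<Rightarrow> ('e \<Rightarrow> 'v) \<Rightarrow> 'v \<Rightarrow> 'v \<Rightarrow> 'e dtree \<Rightarrow> bool" where
  "is_decomp_tree A tail head s t T \<longleftrightarrow>
     distinct (leaves T) \<and> set (leaves T) = A \<and> realises tail head T s t"

definition sp_digraph :: "'e set \<Rightarrow> ('e \<Rightarrow> 'v) \<Rightarrow> ('e \<Rightarrow> 'v) \<Rightarrow> 'v \<Rightarrow> 'v \<Rightarrow> bool" where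
  "sp_digraph A tail head s t \<longleftrightarrow> (\<exists>T. is_decomp_tree A tail head s t T)"

text \<open>Root-to-leaf paths, recorded as the list of labels (True = S, False = P)
  of the internal vertices traversed, from the root downwards.\<close>
fun label_paths :: "'e dtree \<Rightarrow> bool list set" where
  "label_paths (Leaf e) = {[]}"
| "label_paths (SNode l r) = (\<lambda>p. True # p) ` (label_paths l \<union> label_paths r)"
| "label_paths (PNode l r) = (\<lambda>p. False # p) ` (label_paths l \<union> label_paths r)"

text \<open>Number of maximal runs of S-labels along a path; since S-components are connected
  subtrees, these runs are exactly the distinct S-components traversed by the path.\<close>
fun s_runs :: "bool list \<Rightarrow> nat" where
  "s_runs [] = 0"
| "s_runs [b] = (if b then 1 else 0)"
| "s_runs (b # c # p) = (if b \<and> \<not> c then 1 else 0) + s_runs (c # p)"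

definition phi :: "'e dtree \<Rightarrow> nat" where
  "phi T = Max (s_runs ` label_paths T)"

end

theory Submission
  imports Defs
begin

(* phi obeys phi (Leaf e) = 0, phi (PNode l r) = max (phi l) (phi r) and
   phi (SNode l r) = max (phi' l) (phi' r), where phi' adds 1 for a child that is not an S-node.
   So it suffices that the decomposition tree is determined by D up to changes that preserve
   these recursions.  The root is an S-node iff D has a cut vertex m: every arc reaches m or is
   reached from m.  Then any tree of D re-associates, without changing phi, into a series split
   at m, and the left factor of such a split is forced: it consists of the arcs from which m is
   reachable.  Otherwise the root is a P-node, and any tree of D splits along the two parallel
   parts into two trees, the larger of whose phi-values is phi. *)

fun is_series :: "'e dtree \<Rightarrow> bool" where
  "is_series (SNode l r) = True"
| "is_series (Leaf e) = False"
| "is_series (PNode l r) = False"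

text \<open>Seen from an S-parent, a child that is not itself an S-node starts a new S-component.\<close>
definition phi_below_series :: "'e dtree \<Rightarrow> nat" where
  "phi_below_series X = phi X + (if is_series X then 0 else 1)"

lemma finite_label_paths: "finite (label_paths T)"
  by (induction T) auto

lemma label_paths_nonempty: "label_paths T \<noteq> {}"
  by (induction T) auto

lemma s_runs_False_Cons [simp]: "s_runs (False # p) = s_runs p"
  by (cases p) auto

lemma s_runs_True_Cons_label_path:
  "p \<in> label_paths X \<Longrightarrow> s_runs (True # p) = s_runs p + (if is_series X then 0 else 1)"
  by (cases X; cases p) auto

lemma phi_Leaf [simp]: "phi (Leaf e) = 0"
  by (simp add: phi_def)

lemma phi_PNode [simp]: "phi (PNode l r) = max (phi l) (phi r)"
  by (simp add: phi_def image_image image_Un Max_Un finite_label_paths label_paths_nonempty)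

lemma Max_s_runs_True_Cons: "Max ((\<lambda>p. s_runs (True # p)) ` label_paths X) = phi_below_series X"
proof -
  have "(\<lambda>p. s_runs (True # p)) ` label_paths X
      = (\<lambda>p. s_runs p + (if is_series X then 0 else 1)) ` label_paths X"
    by (rule image_cong[OF refl s_runs_True_Cons_label_path])
  then show ?thesis
    by (simp add: phi_below_series_def phi_def Max_add_commute finite_label_paths label_paths_nonempty)
qed

lemma phi_SNode [simp]: "phi (SNode l r) = max (phi_below_series l) (phi_below_series r)"
  by (simp add: phi_def image_image image_Un Max_Un finite_label_paths label_paths_nonempty
      flip: Max_s_runs_True_Cons)

context
  fixes tail head :: "'e \<Rightarrow> 'v"
begin

definition arc_rel :: "'e set \<Rightarrow> ('v \<times> 'v) set" where
  "arc_rel A = {(tail e, head e) | e. e \<in> A}"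

definition verts :: "'e set \<Rightarrow> 'v set" where
  "verts A = tail ` A \<union> head ` A"

abbreviation arcs :: "'e dtree \<Rightarrow> 'e set" where
  "arcs T \<equiv> set (leaves T)"

lemma tverts_eq_verts: "tverts tail head T = verts (arcs T)"
  by (simp add: tverts_def verts_def)

lemma verts_mono: "A \<subseteq> B \<Longrightarrow> verts A \<subseteq> verts B"
  by (auto simp: verts_def)

lemma tverts_Un_if_arcs_Un:
  "arcs X \<union> arcs Y = arcs Z \<Longrightarrow> tverts tail head X \<union> tverts tail head Y = tverts tail head Z"
  by (auto simp: tverts_def)

lemma arc_rel_iff: "(x, y) \<in> arc_rel A \<longleftrightarrow> (\<exists>e\<in>A. tail e = x \<and> head e = y)"
  by (auto simp: arc_rel_def)

lemma rtrancl_arc_rel_mono: "A \<subseteq> B \<Longrightarrow> (arc_rel A)\<^sup>* \<subseteq> (arc_rel B)\<^sup>*"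
  by (rule rtrancl_mono) (auto simp: arc_rel_def)

lemma rtrancl_arc_rel_forward_closed:
  assumes closed: "\<And>e. e \<in> A \<Longrightarrow> tail e \<in> W \<Longrightarrow> e \<in> B \<and> head e \<in> W"
    and path: "(x, y) \<in> (arc_rel A)\<^sup>*" and "x \<in> W"
  shows "(x, y) \<in> (arc_rel B)\<^sup>* \<and> y \<in> W"
  using path
proof (induction rule: rtrancl_induct)
  case base
  then show ?case using \<open>x \<in> W\<close> by simp
next
  case (step y z)
  then obtain e where "e \<in> A" "tail e = y" "head e = z" by (auto simp: arc_rel_iff)
  with step closed have "(y, z) \<in> arc_rel B" "z \<in> W" by (auto simp: arc_rel_iff)
  with step show ?case by (meson rtrancl.rtrancl_into_rtrancl)
qed

lemma rtrancl_arc_rel_backward_closed: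
  assumes closed: "\<And>e. e \<in> A \<Longrightarrow> head e \<in> W \<Longrightarrow> e \<in> B \<and> tail e \<in> W"
    and path: "(x, y) \<in> (arc_rel A)\<^sup>*" and "y \<in> W"
  shows "(x, y) \<in> (arc_rel B)\<^sup>* \<and> x \<in> W"
  using path
proof (induction rule: converse_rtrancl_induct)
  case base
  then show ?case using \<open>y \<in> W\<close> by simp
next
  case (step x z)
  then obtain e where "e \<in> A" "tail e = x" "head e = z" by (auto simp: arc_rel_iff)
  with step closed have "(x, z) \<in> arc_rel B" "x \<in> W" by (auto simp: arc_rel_iff)
  with step show ?case by (meson converse_rtrancl_into_rtrancl)
qed

lemma tverts_SNode [simp]: "tverts tail head (SNode l r) = tverts tail head l \<union> tverts tail head r"
  by (auto simp: tverts_def)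

lemma tverts_PNode [simp]: "tverts tail head (PNode l r) = tverts tail head l \<union> tverts tail head r"
  by (auto simp: tverts_def)

lemma realises_ends_in_tverts:
  "realises tail head T s t \<Longrightarrow> s \<in> tverts tail head T \<and> t \<in> tverts tail head T"
  by (induction rule: realises.induct) (auto simp: tverts_def)

lemma realises_source_neq_sink: "realises tail head T s t \<Longrightarrow> s \<noteq> t"
proof (induction rule: realises.induct)
  case (ser T1 s m T2 t)
  then show ?case using realises_ends_in_tverts[OF ser.hyps(1)] realises_ends_in_tverts[OF ser.hyps(2)]
    by auto
qed auto

lemma realises_arcs_nonempty: "realises tail head T s t \<Longrightarrow> arcs T \<noteq> {}"
  by (induction rule: realises.induct) auto

lemma realises_source_sink:
  "realises tail head T s t \<Longrightarrow> e \<in> arcs T \<Longrightarrow> head e \<noteq> s \<and> tail e \<noteq> t"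
proof (induction arbitrary: e rule: realises.induct)
  case (ser T1 s m T2 t)
  have "e \<in> arcs T1 \<Longrightarrow> tail e \<in> tverts tail head T1"
    and "e \<in> arcs T2 \<Longrightarrow> head e \<in> tverts tail head T2"
    by (auto simp: tverts_def)
  then show ?case
    using ser realises_ends_in_tverts[OF ser.hyps(1)] realises_ends_in_tverts[OF ser.hyps(2)] by auto
qed auto

lemma realises_vertex_on_path:
  "realises tail head T s t \<Longrightarrow> v \<in> tverts tail head T \<Longrightarrow>
   (s, v) \<in> (arc_rel (arcs T))\<^sup>* \<and> (v, t) \<in> (arc_rel (arcs T))\<^sup>*"
proof (induction arbitrary: v rule: realises.induct)
  case (arc e s t)
  then have "(s, t) \<in> arc_rel (arcs (Leaf e))" by (auto simp: arc_rel_iff)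
  with arc show ?case by (auto simp: tverts_def)
next
  case (ser T1 s m T2 t)
  have sub1: "(arc_rel (arcs T1))\<^sup>* \<subseteq> (arc_rel (arcs (SNode T1 T2)))\<^sup>*"
    and sub2: "(arc_rel (arcs T2))\<^sup>* \<subseteq> (arc_rel (arcs (SNode T1 T2)))\<^sup>*"
    by (auto intro!: rtrancl_arc_rel_mono)
  have "(s, m) \<in> (arc_rel (arcs (SNode T1 T2)))\<^sup>*" "(m, t) \<in> (arc_rel (arcs (SNode T1 T2)))\<^sup>*"
    using ser.IH realises_ends_in_tverts[OF ser.hyps(1)] realises_ends_in_tverts[OF ser.hyps(2)]
      sub1 sub2 by blast+
  moreover from ser.prems have "v \<in> tverts tail head T1 \<or> v \<in> tverts tail head T2" by simp
  ultimately show ?case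
    using ser.IH sub1 sub2 by (meson rtrancl_trans subsetD)
next
  case (par T1 s t T2)
  have sub1: "(arc_rel (arcs T1))\<^sup>* \<subseteq> (arc_rel (arcs (PNode T1 T2)))\<^sup>*"
    and sub2: "(arc_rel (arcs T2))\<^sup>* \<subseteq> (arc_rel (arcs (PNode T1 T2)))\<^sup>*"
    by (auto intro!: rtrancl_arc_rel_mono)
  from par.prems have "v \<in> tverts tail head T1 \<or> v \<in> tverts tail head T2" by simp
  then show ?case using par.IH sub1 sub2 by blast
qed

definition cut_vertex :: "'e set \<Rightarrow> 'v \<Rightarrow> 'v \<Rightarrow> 'v \<Rightarrow> bool" where
  "cut_vertex A s t m \<longleftrightarrow> m \<in> verts A - {s, t} \<and>
     (\<forall>e\<in>A. (head e, m) \<in> (arc_rel A)\<^sup>* \<or> (m, tail e) \<in> (arc_rel A)\<^sup>*)"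

lemma cut_vertex_SNode:
  assumes L: "realises tail head L s m" and R: "realises tail head R m t"
    and "tverts tail head L \<inter> tverts tail head R = {m}"
  shows "cut_vertex (arcs (SNode L R)) s t m"
proof -
  have sub1: "(arc_rel (arcs L))\<^sup>* \<subseteq> (arc_rel (arcs (SNode L R)))\<^sup>*"
    and sub2: "(arc_rel (arcs R))\<^sup>* \<subseteq> (arc_rel (arcs (SNode L R)))\<^sup>*"
    by (auto intro!: rtrancl_arc_rel_mono)
  have "(head e, m) \<in> (arc_rel (arcs (SNode L R)))\<^sup>*" if "e \<in> arcs L" for e
    using that realises_vertex_on_path[OF L, of "head e"] sub1 by (auto simp: tverts_def)
  moreover have "(m, tail e) \<in> (arc_rel (arcs (SNode L R)))\<^sup>*" if "e \<in> arcs R" for e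
    using that realises_vertex_on_path[OF R, of "tail e"] sub2 by (auto simp: tverts_def)
  moreover have "m \<in> verts (arcs (SNode L R))"
    using realises_ends_in_tverts[OF L] by (auto simp: tverts_def verts_def)
  ultimately show ?thesis
    using realises_source_neq_sink[OF L] realises_source_neq_sink[OF R]
    by (auto simp: cut_vertex_def)
qed

lemma cut_vertex_in_part:
  assumes no_in: "\<forall>e\<in>A. head e \<noteq> s" and no_out: "\<forall>e\<in>A. tail e \<noteq> t"
    and cut: "cut_vertex A s t m" and parts: "B \<union> C = A" and "e \<in> C"
    and shared: "verts B \<inter> verts C \<subseteq> {s, t}"
  shows "m \<in> verts C"
proof -
  \<comment> \<open>An arc with an end in verts C - {s, t} lies in C; as no arc enters s or leaves t,
    walks forward from head e, or backward from tail e, never leave verts C.\<close>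
  have "e \<in> A" using parts \<open>e \<in> C\<close> by auto
  with cut have "(head e, m) \<in> (arc_rel A)\<^sup>* \<or> (m, tail e) \<in> (arc_rel A)\<^sup>*"
    by (auto simp: cut_vertex_def)
  then show ?thesis
  proof
    assume path: "(head e, m) \<in> (arc_rel A)\<^sup>*"
    have "e' \<in> A \<and> head e' \<in> verts C - {s}" if "e' \<in> A" "tail e' \<in> verts C - {s}" for e'
    proof -
      have "e' \<notin> B" using that no_out shared by (auto simp: verts_def)
      with that parts no_in show ?thesis by (auto simp: verts_def)
    qed
    moreover have "head e \<in> verts C - {s}" using \<open>e \<in> C\<close> \<open>e \<in> A\<close> no_in by (auto simp: verts_def)
    ultimately show ?thesis using rtrancl_arc_rel_forward_closed[OF _ path] by blast
  next
    assume path: "(m, tail e) \<in> (arc_rel A)\<^sup>*"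
    have "e' \<in> A \<and> tail e' \<in> verts C - {t}" if "e' \<in> A" "head e' \<in> verts C - {t}" for e'
    proof -
      have "e' \<notin> B" using that no_in shared by (auto simp: verts_def)
      with that parts no_out show ?thesis by (auto simp: verts_def)
    qed
    moreover have "tail e \<in> verts C - {t}" using \<open>e \<in> C\<close> \<open>e \<in> A\<close> no_out by (auto simp: verts_def)
    ultimately show ?thesis using rtrancl_arc_rel_backward_closed[OF _ path] by blast
  qed
qed

lemma cut_vertex_no_split:
  assumes "\<forall>e\<in>A. head e \<noteq> s" "\<forall>e\<in>A. tail e \<noteq> t" and cut: "cut_vertex A s t m"
    and "B \<union> C = A" "B \<noteq> {}" "C \<noteq> {}" and shared: "verts B \<inter> verts C \<subseteq> {s, t}"
  shows False
proof -
  obtain b c where "b \<in> B" "c \<in> C" using assms(5,6) by blast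
  have "m \<in> verts C" using cut_vertex_in_part[OF assms(1-4) \<open>c \<in> C\<close> shared] .
  moreover have "m \<in> verts B"
    using cut_vertex_in_part[OF assms(1-3), of C B b] assms(4) \<open>b \<in> B\<close> shared by blast
  ultimately show False using shared cut by (auto simp: cut_vertex_def)
qed

lemma is_series_iff_cut_vertex:
  assumes T: "realises tail head T s t"
  shows "is_series T \<longleftrightarrow> (\<exists>m. cut_vertex (arcs T) s t m)"
  using T
proof cases
  case (arc e)
  then have "verts (arcs T) = {s, t}" by (simp add: verts_def insert_commute)
  then have "\<not> cut_vertex (arcs T) s t m" for m by (simp add: cut_vertex_def)
  with arc(1) show ?thesis by simp
next
  case (ser L m R)
  then show ?thesis using cut_vertex_SNode[of L s m R t] by auto
next
  case (par L R)
  have "arcs L \<union> arcs R = arcs T" using par(1) by simp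
  moreover have "\<forall>e\<in>arcs T. head e \<noteq> s" "\<forall>e\<in>arcs T. tail e \<noteq> t"
    using realises_source_sink[OF T] by auto
  moreover have "verts (arcs L) \<inter> verts (arcs R) \<subseteq> {s, t}"
    using par(4) by (simp add: tverts_eq_verts)
  ultimately have "\<not> cut_vertex (arcs T) s t m" for m
    using cut_vertex_no_split realises_arcs_nonempty[OF par(2)] realises_arcs_nonempty[OF par(3)]
    by metis
  with par(1) show ?thesis by simp
qed

lemma is_series_eq_if_same_arcs:
  "realises tail head T s t \<Longrightarrow> realises tail head T' s t \<Longrightarrow> arcs T = arcs T' \<Longrightarrow>
   is_series T = is_series T'"
  by (simp add: is_series_iff_cut_vertex)

lemma realises_SNode_left_arcs:
  assumes L: "realises tail head L s m" and R: "realises tail head R m t"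
    and I: "tverts tail head L \<inter> tverts tail head R = {m}"
  shows "arcs L = {e \<in> arcs (SNode L R). (head e, m) \<in> (arc_rel (arcs (SNode L R)))\<^sup>*}"
proof (intro equalityI subsetI)
  fix e assume "e \<in> arcs L"
  moreover have "(arc_rel (arcs L))\<^sup>* \<subseteq> (arc_rel (arcs (SNode L R)))\<^sup>*"
    by (auto intro!: rtrancl_arc_rel_mono)
  ultimately show "e \<in> {e \<in> arcs (SNode L R). (head e, m) \<in> (arc_rel (arcs (SNode L R)))\<^sup>*}"
    using realises_vertex_on_path[OF L, of "head e"] by (auto simp: tverts_def)
next
  fix e assume e: "e \<in> {e \<in> arcs (SNode L R). (head e, m) \<in> (arc_rel (arcs (SNode L R)))\<^sup>*}"
  show "e \<in> arcs L"
  proof (rule ccontr)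
    assume "e \<notin> arcs L"
    with e have "e \<in> arcs R" by auto
    have "e' \<in> arcs (SNode L R) \<and> head e' \<in> tverts tail head R - {m}"
      if "e' \<in> arcs (SNode L R)" "tail e' \<in> tverts tail head R - {m}" for e'
    proof -
      have "e' \<notin> arcs L" using that I by (auto simp: tverts_def)
      with that realises_source_sink[OF R, of e'] show ?thesis by (auto simp: tverts_def)
    qed
    moreover have "head e \<in> tverts tail head R - {m}"
      using \<open>e \<in> arcs R\<close> realises_source_sink[OF R] by (auto simp: tverts_def)
    ultimately have "m \<in> tverts tail head R - {m}"
      using rtrancl_arc_rel_forward_closed e by blast
    then show False by simp
  qed
qed

lemma realises_SNode_left_arcs_unique:
  assumes L: "realises tail head L s m" and R: "realises tail head R m t"
    and I: "tverts tail head L \<inter> tverts tail head R = {m}"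
    and L': "realises tail head L' s m" and R': "realises tail head R' m t"
    and I': "tverts tail head L' \<inter> tverts tail head R' = {m}"
    and same: "arcs (SNode L R) = arcs (SNode L' R')"
  shows "arcs L = arcs L'"
proof -
  have "arcs L = {e \<in> arcs (SNode L R). (head e, m) \<in> (arc_rel (arcs (SNode L R)))\<^sup>*}"
    by (rule realises_SNode_left_arcs[OF L R I])
  also have "\<dots> = {e \<in> arcs (SNode L' R'). (head e, m) \<in> (arc_rel (arcs (SNode L' R')))\<^sup>*}"
    by (simp only: same)
  also have "\<dots> = arcs L'"
    by (rule realises_SNode_left_arcs[OF L' R' I', symmetric])
  finally show ?thesis .
qed

lemma cut_vertex_SNode_right:
  assumes L: "realises tail head L s m0" and R: "realises tail head R m0 t"
    and I: "tverts tail head L \<inter> tverts tail head R = {m0}"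
    and cut: "cut_vertex (arcs (SNode L R)) s t m" and "m \<in> tverts tail head R" "m \<noteq> m0"
  shows "cut_vertex (arcs R) m0 t m"
proof -
  have closed: "e \<in> arcs R \<and> head e \<in> tverts tail head R"
    if "e \<in> arcs (SNode L R)" "tail e \<in> tverts tail head R" for e
  proof -
    have "e \<notin> arcs L"
      using that I realises_source_sink[OF L, of e] by (auto simp: tverts_def)
    with that show ?thesis by (auto simp: tverts_def)
  qed
  have "(head e, m) \<in> (arc_rel (arcs R))\<^sup>* \<or> (m, tail e) \<in> (arc_rel (arcs R))\<^sup>*"
    if "e \<in> arcs R" for e
  proof -
    have "head e \<in> tverts tail head R" using that by (auto simp: tverts_def)
    moreover have "(head e, m) \<in> (arc_rel (arcs (SNode L R)))\<^sup>* \<or>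
        (m, tail e) \<in> (arc_rel (arcs (SNode L R)))\<^sup>*"
      using cut that by (auto simp: cut_vertex_def)
    ultimately show ?thesis
      using rtrancl_arc_rel_forward_closed[OF closed] \<open>m \<in> tverts tail head R\<close> by blast
  qed
  with assms(5,6) cut show ?thesis by (auto simp: cut_vertex_def tverts_eq_verts)
qed

lemma cut_vertex_SNode_left:
  assumes L: "realises tail head L s m0" and R: "realises tail head R m0 t"
    and I: "tverts tail head L \<inter> tverts tail head R = {m0}"
    and cut: "cut_vertex (arcs (SNode L R)) s t m" and "m \<in> tverts tail head L" "m \<noteq> m0"
  shows "cut_vertex (arcs L) s m0 m"
proof -
  have closed: "e \<in> arcs L \<and> tail e \<in> tverts tail head L"
    if "e \<in> arcs (SNode L R)" "head e \<in> tverts tail head L" for e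
  proof -
    have "e \<notin> arcs R"
      using that I realises_source_sink[OF R, of e] by (auto simp: tverts_def)
    with that show ?thesis by (auto simp: tverts_def)
  qed
  have "(head e, m) \<in> (arc_rel (arcs L))\<^sup>* \<or> (m, tail e) \<in> (arc_rel (arcs L))\<^sup>*"
    if "e \<in> arcs L" for e
  proof -
    have "tail e \<in> tverts tail head L" using that by (auto simp: tverts_def)
    moreover have "(head e, m) \<in> (arc_rel (arcs (SNode L R)))\<^sup>* \<or>
        (m, tail e) \<in> (arc_rel (arcs (SNode L R)))\<^sup>*"
      using cut that by (auto simp: cut_vertex_def)
    ultimately show ?thesis
      using rtrancl_arc_rel_backward_closed[OF closed] \<open>m \<in> tverts tail head L\<close> by blast
  qed
  with assms(5,6) cut show ?thesis by (auto simp: cut_vertex_def tverts_eq_verts)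
qed

lemma realises_SNode_assoc_left:
  assumes A: "realises tail head A s m0" and B: "realises tail head B m0 m"
    and C: "realises tail head C m t"
    and AB: "tverts tail head A \<inter> (tverts tail head B \<union> tverts tail head C) = {m0}"
    and BC: "tverts tail head B \<inter> tverts tail head C = {m}"
  shows "realises tail head (SNode A B) s m" "tverts tail head (SNode A B) \<inter> tverts tail head C = {m}"
proof -
  have "m0 \<in> tverts tail head A" "m0 \<in> tverts tail head B" "m0 \<noteq> m"
    using realises_ends_in_tverts[OF A] realises_ends_in_tverts[OF B] realises_source_neq_sink[OF B]
    by auto
  with AB BC have "tverts tail head A \<inter> tverts tail head B = {m0}"
    "tverts tail head A \<inter> tverts tail head C = {}"
    by auto
  with A B BC show "realises tail head (SNode A B) s m"
    "tverts tail head (SNode A B) \<inter> tverts tail head C = {m}"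
    by (auto intro: realises.ser)
qed

lemma realises_SNode_assoc_right:
  assumes A: "realises tail head A s m" and B: "realises tail head B m m0"
    and C: "realises tail head C m0 t"
    and AB: "tverts tail head A \<inter> tverts tail head B = {m}"
    and BC: "(tverts tail head A \<union> tverts tail head B) \<inter> tverts tail head C = {m0}"
  shows "realises tail head (SNode B C) m t" "tverts tail head A \<inter> tverts tail head (SNode B C) = {m}"
proof -
  have "m0 \<in> tverts tail head B" "m0 \<in> tverts tail head C" "m \<noteq> m0"
    using realises_ends_in_tverts[OF B] realises_ends_in_tverts[OF C] realises_source_neq_sink[OF B]
    by auto
  with AB BC have "tverts tail head B \<inter> tverts tail head C = {m0}"
    "tverts tail head A \<inter> tverts tail head C = {}"
    by auto
  with B C AB show "realises tail head (SNode B C) m t"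
    "tverts tail head A \<inter> tverts tail head (SNode B C) = {m}"
    by (auto intro: realises.ser)
qed

definition reassociates_at :: "'e dtree \<Rightarrow> 'v \<Rightarrow> 'v \<Rightarrow> 'v \<Rightarrow> bool" where
  "reassociates_at T s m t \<longleftrightarrow> (\<exists>T' T''. realises tail head T' s m \<and> realises tail head T'' m t \<and>
     tverts tail head T' \<inter> tverts tail head T'' = {m} \<and> distinct (leaves T' @ leaves T'') \<and>
     arcs T' \<union> arcs T'' = arcs T \<and> phi (SNode T' T'') = phi T)"

lemma reassociates_at_SNode_right:
  assumes L: "realises tail head L s m0" and R: "realises tail head R m0 t"
    and I: "tverts tail head L \<inter> tverts tail head R = {m0}"
    and d: "distinct (leaves (SNode L R))" and "is_series R" and "reassociates_at R m0 m t"
  shows "reassociates_at (SNode L R) s m t"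
proof -
  obtain R' R'' where R': "realises tail head R' m0 m" and R'': "realises tail head R'' m t"
    and I': "tverts tail head R' \<inter> tverts tail head R'' = {m}"
    and d': "distinct (leaves R' @ leaves R'')" and a': "arcs R' \<union> arcs R'' = arcs R"
    and phi': "phi (SNode R' R'') = phi R"
    using assms(6) unfolding reassociates_at_def by blast
  have "realises tail head (SNode L R') s m"
    "tverts tail head (SNode L R') \<inter> tverts tail head R'' = {m}"
    using realises_SNode_assoc_left[OF L R' R'' _ I'] I tverts_Un_if_arcs_Un[OF a'] by simp_all
  moreover have "distinct (leaves (SNode L R') @ leaves R'')"
    "arcs (SNode L R') \<union> arcs R'' = arcs (SNode L R)"
    using d d' a' by auto
  moreover have "phi (SNode (SNode L R') R'') = phi (SNode L R)"
    using phi' \<open>is_series R\<close> by (simp add: phi_below_series_def max.assoc)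
  ultimately show ?thesis using R'' unfolding reassociates_at_def by blast
qed

lemma reassociates_at_SNode_left:
  assumes L: "realises tail head L s m0" and R: "realises tail head R m0 t"
    and I: "tverts tail head L \<inter> tverts tail head R = {m0}"
    and d: "distinct (leaves (SNode L R))" and "is_series L" and "reassociates_at L s m m0"
  shows "reassociates_at (SNode L R) s m t"
proof -
  obtain L' L'' where L': "realises tail head L' s m" and L'': "realises tail head L'' m m0"
    and I': "tverts tail head L' \<inter> tverts tail head L'' = {m}"
    and d': "distinct (leaves L' @ leaves L'')" and a': "arcs L' \<union> arcs L'' = arcs L"
    and phi': "phi (SNode L' L'') = phi L"
    using assms(6) unfolding reassociates_at_def by blast
  have "realises tail head (SNode L'' R) m t"
    "tverts tail head L' \<inter> tverts tail head (SNode L'' R) = {m}"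
    using realises_SNode_assoc_right[OF L' L'' R I'] I tverts_Un_if_arcs_Un[OF a'] by simp_all
  moreover have "distinct (leaves L' @ leaves (SNode L'' R))"
    "arcs L' \<union> arcs (SNode L'' R) = arcs (SNode L R)"
    using d d' a' by auto
  moreover have "phi (SNode L' (SNode L'' R)) = phi (SNode L R)"
    using phi' \<open>is_series L\<close> by (simp add: phi_below_series_def max.assoc)
  ultimately show ?thesis using L' unfolding reassociates_at_def by blast
qed

lemma cut_vertex_reassociates:
  "realises tail head T s t \<Longrightarrow> distinct (leaves T) \<Longrightarrow> cut_vertex (arcs T) s t m \<Longrightarrow>
   reassociates_at T s m t"
proof (induction arbitrary: m rule: realises.induct)
  case (arc e s t)
  have "\<not> is_series (Leaf e)" by simp
  with arc show ?case
    using is_series_iff_cut_vertex[OF realises.arc[where tail = tail and head = head, OF arc.hyps]]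
    by blast
next
  case (par L s t R)
  have "\<not> is_series (PNode L R)" by simp
  with par show ?case using is_series_iff_cut_vertex[OF realises.par[OF par.hyps]] by blast
next
  case (ser L s m0 R t)
  have "m \<in> tverts tail head (SNode L R)"
    using ser.prems(2) by (simp add: cut_vertex_def tverts_eq_verts)
  then consider (mid) "m = m0"
    | (right) "m \<in> tverts tail head R" "m \<noteq> m0"
    | (left) "m \<in> tverts tail head L" "m \<noteq> m0"
    by auto
  then show ?case
  proof cases
    case mid
    with ser.hyps ser.prems(1) show ?thesis unfolding reassociates_at_def by auto
  next
    case right
    have cut: "cut_vertex (arcs R) m0 t m"
      using cut_vertex_SNode_right[OF ser.hyps ser.prems(2) right] .
    then have "is_series R" using is_series_iff_cut_vertex[OF ser.hyps(2)] by blast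
    with cut ser show ?thesis using reassociates_at_SNode_right by simp
  next
    case left
    have cut: "cut_vertex (arcs L) s m0 m"
      using cut_vertex_SNode_left[OF ser.hyps ser.prems(2) left] .
    then have "is_series L" using is_series_iff_cut_vertex[OF ser.hyps(1)] by blast
    with cut ser show ?thesis using reassociates_at_SNode_left by simp
  qed
qed

text \<open>The empty arc set is admitted, with value 0, so that a part of a split may avoid a subtree.\<close>
definition realisable_with_phi :: "'v \<Rightarrow> 'v \<Rightarrow> 'e set \<Rightarrow> nat \<Rightarrow> bool" where
  "realisable_with_phi s t B k \<longleftrightarrow> (B = {} \<and> k = 0) \<or>
     (\<exists>X. realises tail head X s t \<and> distinct (leaves X) \<and> arcs X = B \<and> phi X = k)"

lemma realisable_with_phi_emptyD: "realisable_with_phi s t {} k \<Longrightarrow> k = 0"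
  by (auto simp: realisable_with_phi_def dest: realises_arcs_nonempty)

lemma realisable_with_phi_Un:
  assumes B1: "realisable_with_phi s t B1 k1" and B2: "realisable_with_phi s t B2 k2"
    and "B1 \<inter> B2 = {}" and shared: "verts B1 \<inter> verts B2 \<subseteq> {s, t}"
  shows "realisable_with_phi s t (B1 \<union> B2) (max k1 k2)"
proof (cases "B1 = {} \<or> B2 = {}")
  case True
  then show ?thesis
    using B1 B2 realisable_with_phi_emptyD[of s t k1] realisable_with_phi_emptyD[of s t k2] by auto
next
  case False
  then obtain X1 X2 where
    X1: "realises tail head X1 s t" "distinct (leaves X1)" "arcs X1 = B1" "phi X1 = k1" and
    X2: "realises tail head X2 s t" "distinct (leaves X2)" "arcs X2 = B2" "phi X2 = k2"
    using B1 B2 unfolding realisable_with_phi_def by blast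
  have "tverts tail head X1 \<inter> tverts tail head X2 = {s, t}"
    using shared X1(3) X2(3) realises_ends_in_tverts[OF X1(1)] realises_ends_in_tverts[OF X2(1)]
    by (auto simp: tverts_eq_verts)
  with X1(1) X2(1) have "realises tail head (PNode X1 X2) s t" by (rule realises.par)
  moreover have "distinct (leaves (PNode X1 X2))" using X1 X2 \<open>B1 \<inter> B2 = {}\<close> by auto
  ultimately show ?thesis
    unfolding realisable_with_phi_def using X1 X2 by (intro disjI2 exI[of _ "PNode X1 X2"]) auto
qed

lemma realises_trivial_split:
  assumes "realises tail head T s t" "distinct (leaves T)" "B \<union> C = arcs T" "B = {} \<or> C = {}"
  shows "\<exists>kB kC. realisable_with_phi s t B kB \<and> realisable_with_phi s t C kC \<and> max kB kC = phi T"
proof -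
  have "realisable_with_phi s t {} 0" "realisable_with_phi s t (arcs T) (phi T)"
    using assms(1,2) by (auto simp: realisable_with_phi_def)
  with assms(3,4) show ?thesis by (metis max_0L max_0R sup_bot.left_neutral sup_bot.right_neutral)
qed

lemma realises_parallel_split:
  "realises tail head T s t \<Longrightarrow> distinct (leaves T) \<Longrightarrow> B \<union> C = arcs T \<Longrightarrow> B \<inter> C = {} \<Longrightarrow>
   verts B \<inter> verts C \<subseteq> {s, t} \<Longrightarrow>
   \<exists>kB kC. realisable_with_phi s t B kB \<and> realisable_with_phi s t C kC \<and> max kB kC = phi T"
proof (induction arbitrary: B C rule: realises.induct)
  case (arc e s t)
  then have "B = {} \<or> C = {}" by (auto simp: Un_singleton_iff)
  with arc show ?case
    using realises_trivial_split realises.arc[where tail = tail and head = head] by blast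
next
  case (ser L s m R t)
  have T: "realises tail head (SNode L R) s t" using ser.hyps by (rule realises.ser)
  have "B = {} \<or> C = {}"
    using cut_vertex_no_split[OF _ _ cut_vertex_SNode[OF ser.hyps] ser.prems(2) _ _ ser.prems(4)]
      realises_source_sink[OF T] by blast
  with T ser.prems show ?case using realises_trivial_split by blast
next
  case (par L s t R)
  have shared: "verts (B \<inter> arcs X) \<inter> verts (C \<inter> arcs X) \<subseteq> {s, t}" for X
    using par.prems(4) verts_mono[of "B \<inter> arcs X" B] verts_mono[of "C \<inter> arcs X" C] by blast
  obtain kBL kCL where L: "realisable_with_phi s t (B \<inter> arcs L) kBL"
    "realisable_with_phi s t (C \<inter> arcs L) kCL" "max kBL kCL = phi L"
    using par.IH(1)[OF _ _ _ shared[of L]] par.prems(1-3) by auto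
  obtain kBR kCR where R: "realisable_with_phi s t (B \<inter> arcs R) kBR"
    "realisable_with_phi s t (C \<inter> arcs R) kCR" "max kBR kCR = phi R"
    using par.IH(2)[OF _ _ _ shared[of R]] par.prems(1-3) by auto
  have parts: "verts (X \<inter> arcs L) \<inter> verts (X \<inter> arcs R) \<subseteq> {s, t}" for X
    using par.hyps(3) verts_mono[of "X \<inter> arcs L" "arcs L"] verts_mono[of "X \<inter> arcs R" "arcs R"]
    by (auto simp: tverts_eq_verts)
  have "realisable_with_phi s t ((B \<inter> arcs L) \<union> (B \<inter> arcs R)) (max kBL kBR)"
    and "realisable_with_phi s t ((C \<inter> arcs L) \<union> (C \<inter> arcs R)) (max kCL kCR)"
    using realisable_with_phi_Un[OF L(1) R(1) _ parts] realisable_with_phi_Un[OF L(2) R(2) _ parts]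
      par.prems(1) by auto
  moreover have "(B \<inter> arcs L) \<union> (B \<inter> arcs R) = B" "(C \<inter> arcs L) \<union> (C \<inter> arcs R) = C"
    using par.prems(2) by auto
  moreover have "max (max kBL kBR) (max kCL kCR) = phi (PNode L R)"
    using L(3) R(3) by (simp add: max.assoc max.left_commute)
  ultimately show ?case by metis
qed

lemma realises_single_arc:
  assumes "realises tail head T s t" "distinct (leaves T)" "arcs T = {e}"
  shows "T = Leaf e"
  using assms(1)
proof cases
  case (ser L m R)
  then show ?thesis using assms(2,3) realises_arcs_nonempty[OF ser(2)] realises_arcs_nonempty[OF ser(3)]
    by (auto simp: Un_singleton_iff)
next
  case (par L R)
  then show ?thesis using assms(2,3) realises_arcs_nonempty[OF par(2)] realises_arcs_nonempty[OF par(3)]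
    by (auto simp: Un_singleton_iff)
qed (use assms(3) in auto)

lemma phi_eq_if_same_arcs:
  "realises tail head T1 s t \<Longrightarrow> realises tail head T2 s t \<Longrightarrow>
   distinct (leaves T1) \<Longrightarrow> distinct (leaves T2) \<Longrightarrow> arcs T1 = arcs T2 \<Longrightarrow> phi T1 = phi T2"
proof (induction arbitrary: T2 rule: realises.induct)
  case (arc e s t)
  then have "T2 = Leaf e" using realises_single_arc by simp
  then show ?case by simp
next
  case (ser L s m R t)
  have "cut_vertex (arcs T2) s t m"
    using cut_vertex_SNode[OF ser.hyps] ser.prems(4) by simp
  then obtain L' R' where L': "realises tail head L' s m" and R': "realises tail head R' m t"
    and I': "tverts tail head L' \<inter> tverts tail head R' = {m}"
    and d': "distinct (leaves L' @ leaves R')" and a': "arcs L' \<union> arcs R' = arcs T2"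
    and phi': "phi (SNode L' R') = phi T2"
    using cut_vertex_reassociates[OF ser.prems(1,3)] unfolding reassociates_at_def by blast
  have "arcs L = arcs L'"
    using realises_SNode_left_arcs_unique[OF ser.hyps L' R' I'] a' ser.prems(4) by simp
  moreover have "arcs R = arcs R'"
    using calculation a' d' ser.prems(2,4) by auto
  ultimately have "phi L = phi L'" "phi R = phi R'"
    using ser.IH(1)[OF L'] ser.IH(2)[OF R'] d' ser.prems(2) by auto
  moreover have "is_series L = is_series L'" "is_series R = is_series R'"
    using is_series_eq_if_same_arcs[OF ser.hyps(1) L'] is_series_eq_if_same_arcs[OF ser.hyps(2) R']
      \<open>arcs L = arcs L'\<close> \<open>arcs R = arcs R'\<close> by auto
  ultimately show ?case using phi' by (simp add: phi_below_series_def)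
next
  case (par L s t R)
  obtain kL kR where "realisable_with_phi s t (arcs L) kL" "realisable_with_phi s t (arcs R) kR"
    and max: "max kL kR = phi T2"
    using realises_parallel_split[OF par.prems(1,3), of "arcs L" "arcs R"] par.hyps(3) par.prems(2,4)
    by (auto simp: tverts_eq_verts)
  then obtain X Y where
    X: "realises tail head X s t" "distinct (leaves X)" "arcs X = arcs L" "phi X = kL" and
    Y: "realises tail head Y s t" "distinct (leaves Y)" "arcs Y = arcs R" "phi Y = kR"
    using realises_arcs_nonempty[OF par.hyps(1)] realises_arcs_nonempty[OF par.hyps(2)]
    unfolding realisable_with_phi_def by blast
  have "phi L = kL" "phi R = kR"
    using par.IH(1)[OF X(1)] par.IH(2)[OF Y(1)] X Y par.prems(2) by auto
  with max show ?case by simp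
qed

end

theorem mainTheorem11:
  fixes A :: "'e set" and tail head :: "'e \<Rightarrow> 'v" and s t :: 'v
  assumes "sp_digraph A tail head s t"
    and "is_decomp_tree A tail head s t T1"
    and "is_decomp_tree A tail head s t T2"
  shows "phi T1 = phi T2"
  using assms(2,3) unfolding is_decomp_tree_def by (metis phi_eq_if_same_arcs)

end
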